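(* Let $a,b$ be positive integers and $c$ an integer with $-b<c<a$, and suppose that $E_{(-b,c,a)}^{(\infty,\infty,\infty)}=\bigoplus_{r\in\mathbb{Z}}A_r$ is of full support. Then for every monomial $w\in A_r$ there exist infinitely many monomials in $A_r$ with pairwise disjoint supports whose length equals the length of $w$.
   Context: $E$ is the Grassmann algebra of an infinite-dimensional vector space with basis $e_1,e_2,\dots$; monomials are $1$ and $e_{i_1}\cdots e_{i_k}$ with $i_1<\dots<i_k$, of length $k$ and support $\{e_{i_1},\dots,e_{i_k}\}$. For pairwise distinct integers $r_1,r_2,r_3$, $E_{(r_1,r_2,r_3)}^{(\infty,\infty,\infty)}=\bigoplus_rA_r$ is the $\mathbb{Z}$-grading obtained by splitting $\{e_i\}$ into three disjoint infinite sets, giving elements of the $j$-th set degree $r_j$ and monomials the sum of the degrees of their factors ($A_r$ is spanned by the monomials of degree $r$). Full support means $A_r\ne0$ for every $r\in\mathbb{Z}$. *)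

theory Defs
  imports Main
begin

text \<open>Generators e_i are indexed by natural numbers; a monomial e_{i1}...e_{ik}
  (i1 < ... < ik) is identified with its support, a finite set of indices
  (the empty set being the monomial 1). Its length is the cardinality.
  A grading of the type E_{(r1,r2,r3)}^{(inf,inf,inf)} is given by a degree
  function deg on generators taking exactly the values r1, r2, r3, each on an
  infinite set of generators.\<close>

definition three_inf_grading :: "(nat \<Rightarrow> int) \<Rightarrow> int \<Rightarrow> int \<Rightarrow> int \<Rightarrow> bool" where
  "three_inf_grading deg r1 r2 r3 \<longleftrightarrow>
     (\<forall>i. deg i \<in> {r1, r2, r3}) \<and>
     infinite {i. deg i = r1} \<and> infinite {i. deg i = r2} \<and> infinite {i. deg i = r3}"

definition mon_deg :: "(nat \<Rightarrow> int) \<Rightarrow> nat set \<Rightarrow> int" where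
  "mon_deg deg S = (\<Sum>i\<in>S. deg i)"

definition homog_monomials :: "(nat \<Rightarrow> int) \<Rightarrow> int \<Rightarrow> nat set set" where
  "homog_monomials deg r = {S. finite S \<and> mon_deg deg S = r}"

definition full_support :: "(nat \<Rightarrow> int) \<Rightarrow> bool" where
  "full_support deg \<longleftrightarrow> (\<forall>r::int. homog_monomials deg r \<noteq> {})"

end

theory Submission
  imports Defs
begin

text \<open>Every generator has infinitely many generators of the same degree, so a monomial can be
  copied, generator by generator, onto fresh generators avoiding any prescribed finite set; the
  copy has the same length and degree. Choosing each new copy to avoid all previous ones yields
  infinitely many pairwise disjoint copies.\<close>

lemma three_inf_grading_infinite_fibre:
  assumes "three_inf_grading deg r1 r2 r3"
  shows "infinite {j. deg j = deg i}"
proof -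
  have "deg i \<in> {r1, r2, r3}"
    using assms by (simp add: three_inf_grading_def)
  then consider "deg i = r1" | "deg i = r2" | "deg i = r3"
    by blast
  then show ?thesis
    using assms unfolding three_inf_grading_def by cases simp_all
qed

lemma exists_disjoint_copy:
  fixes deg :: "'a \<Rightarrow> 'b::comm_monoid_add"
  assumes "finite S" and "\<And>i. i \<in> S \<Longrightarrow> infinite {j. deg j = deg i}" and "finite B"
  shows "\<exists>T. finite T \<and> T \<inter> B = {} \<and> card T = card S \<and> sum deg T = sum deg S"
  using assms
proof (induction S arbitrary: B rule: finite_induct)
  case empty
  show ?case by (intro exI[of _ "{}"]) simp
next
  case (insert x S)
  obtain T where T: "finite T" "T \<inter> B = {}" "card T = card S" "sum deg T = sum deg S"
    using insert.IH insert.prems by blast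
  have "infinite ({j. deg j = deg x} - (B \<union> T))"
    using insert.prems T(1) by (intro Diff_infinite_finite) auto
  then obtain j where j: "deg j = deg x" "j \<notin> B" "j \<notin> T"
    using infinite_imp_nonempty by blast
  have "finite (insert j T) \<and> insert j T \<inter> B = {} \<and> card (insert j T) = card (insert x S) \<and>
      sum deg (insert j T) = sum deg (insert x S)"
    using T j insert.hyps by simp
  then show ?case by blast
qed

lemma infinite_pairwise_disjoint_family:
  assumes avoid: "\<And>B. finite B \<Longrightarrow> \<exists>T\<in>P. finite T \<and> T \<noteq> {} \<and> T \<inter> B = {}"
  shows "\<exists>F\<subseteq>P. infinite F \<and> pairwise disjnt F"
proof -
  define pick where "pick B = (SOME T. T \<in> P \<and> finite T \<and> T \<noteq> {} \<and> T \<inter> B = {})" for B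
  have pick: "pick B \<in> P \<and> finite (pick B) \<and> pick B \<noteq> {} \<and> pick B \<inter> B = {}"
    if "finite B" for B
    unfolding pick_def by (rule someI_ex) (use avoid[OF that] in blast)
  define U where "U = rec_nat {} (\<lambda>_ B. B \<union> pick B)"
  have U_0: "U 0 = {}" and U_Suc: "U (Suc k) = U k \<union> pick (U k)" for k
    by (simp_all add: U_def)
  have U_finite: "finite (U k)" for k
    by (induction k) (simp_all add: U_0 U_Suc pick)
  define g where "g k = pick (U k)" for k
  have g: "g k \<in> P" "finite (g k)" "g k \<noteq> {}" "g k \<inter> U k = {}" for k
    using pick[OF U_finite] unfolding g_def by blast+
  have g_disjoint_less: "g k \<inter> g l = {}" if "k < l" for k l
  proof -
    have "g k \<subseteq> U (Suc k)" by (simp add: U_Suc g_def)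
    also have "\<dots> \<subseteq> U l" by (rule lift_Suc_mono_le[of U]) (use that in \<open>auto simp: U_Suc\<close>)
    finally show ?thesis using g(4)[of l] by blast
  qed
  have g_disjoint: "g k \<inter> g l = {}" if "k \<noteq> l" for k l
    using that g_disjoint_less[of k l] g_disjoint_less[of l k] by (cases "k < l") auto
  have "inj g"
  proof (rule injI)
    fix k l assume "g k = g l"
    with g(3)[of k] show "k = l"
      using g_disjoint[of k l] by auto
  qed
  then have "infinite (range g)"
    using finite_imageD by blast
  moreover have "pairwise disjnt (range g)"
  proof (rule pairwiseI)
    fix S T assume "S \<in> range g" "T \<in> range g" "S \<noteq> T"
    then obtain k l where "S = g k" "T = g l" "k \<noteq> l" by blast
    then show "disjnt S T" using g_disjoint by (simp add: disjnt_def)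
  qed
  ultimately show ?thesis
    using g(1) by blast
qed

theorem lemma4p6:
  fixes a b c r :: int and deg :: "nat \<Rightarrow> int" and w :: "nat set"
  assumes "a > 0" and "b > 0" and "-b < c" and "c < a"
    and "three_inf_grading deg (-b) c a"
    and "full_support deg"
    and "w \<in> homog_monomials deg r" and "w \<noteq> {}"
  shows "\<exists>F. F \<subseteq> homog_monomials deg r \<and> infinite F \<and>
             (\<forall>T\<in>F. card T = card w) \<and>
             (\<forall>T1\<in>F. \<forall>T2\<in>F. T1 \<noteq> T2 \<longrightarrow> T1 \<inter> T2 = {})"
proof -
  let ?P = "{T \<in> homog_monomials deg r. card T = card w}"
  have w: "finite w" "mon_deg deg w = r" "card w \<noteq> 0"
    using assms(7,8) by (auto simp: homog_monomials_def)
  have "\<exists>T\<in>?P. finite T \<and> T \<noteq> {} \<and> T \<inter> B = {}" if B: "finite B" for B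
  proof -
    obtain T where "finite T" "T \<inter> B = {}" "card T = card w" "sum deg T = sum deg w"
      using exists_disjoint_copy[OF w(1) _ B] three_inf_grading_infinite_fibre[OF assms(5)]
      by blast
    with w show ?thesis
      by (auto simp: homog_monomials_def mon_deg_def)
  qed
  then obtain F where "F \<subseteq> ?P" "infinite F" "pairwise disjnt F"
    using infinite_pairwise_disjoint_family by meson
  then show ?thesis
    by (auto simp: pairwise_def disjnt_def)
qed

end
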